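(* Let $\mu>0$, $1\le p<+\infty$ and $f\in L^p([0,1])$. Then for every sufficiently large $n\in\mathbb{N}$, $$\|\mathscr{L}_n^K f-f\|_p\le \frac{\ln(2+\mu)}{\ln(1+\mu)}(K_\mu+1)\,\mathcal{K}(f,\Lambda_n)_p,$$ where $K_\mu:=1+\frac{1}{1+\mu}$, $\Lambda_n:=\frac{\ln(2+\mu)}{\ln(1+\mu)}\left(1+\frac{1}{(1+\mu)\ln(1+\mu)}\right)(K_\mu+1)^{-1}T_n$, $T_n:=\frac{1}{2(n+1)}+\frac{\sqrt2}{\sqrt{n+1}}+\gamma_n$ and $\gamma_n:=\max_{x\in[0,1]}|a_{n+1}(x)-x|$.
   Context: Fix $\mu>0$. Let $\ln_\mu(x):=\ln(1+\mu+x)$ for $x\in[0,1]$, and for $f:[0,1]\to\mathbb{R}$ let $f_\mu(x):=f(x)/\ln_\mu(x)$. Let $p_{n,k}(y):=\binom{n}{k}y^k(1-y)^{n-k}$ and $a_{n+1}(x):=\dfrac{\ln\left(1+\frac{x}{(n+1)(1+\mu)}\right)}{\ln\left(1+\frac{1}{(n+1)(1+\mu)}\right)}$, $x\in[0,1]$. For $n\in\mathbb{N}$ define $\mathscr{L}_n^K f(x):=\ln_\mu(x)\sum_{k=0}^n p_{n,k}(a_{n+1}(x))\,(n+1)\int_{k/(n+1)}^{(k+1)/(n+1)} f_\mu(t)\,dt$, $x\in[0,1]$. The Peetre $K$-functional is $\mathcal{K}(f,t)_p:=\inf_{g\in C^1([0,1])}\{\|f-g\|_p+t\|g\|_{C^1}\}$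 for $t>0$, where $\|g\|_{C^1}:=\|g\|_\infty+\|g'\|_\infty$ and $\|\cdot\|_p$ is the usual $L^p([0,1])$ norm. *)

theory Defs
  imports "HOL-Analysis.Analysis"
begin

definition lnmu :: "real \<Rightarrow> real \<Rightarrow> real" where
  "lnmu \<mu> x = ln (1 + \<mu> + x)"

definition fmu :: "real \<Rightarrow> (real \<Rightarrow> real) \<Rightarrow> real \<Rightarrow> real" where
  "fmu \<mu> f x = f x / lnmu \<mu> x"

definition bern :: "nat \<Rightarrow> nat \<Rightarrow> real \<Rightarrow> real" where
  "bern n k y = real (n choose k) * y ^ k * (1 - y) ^ (n - k)"

text \<open>a_{n+1}(x); the argument m plays the role of n+1\<close>
definition aseq :: "real \<Rightarrow> nat \<Rightarrow> real \<Rightarrow> real" where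
  "aseq \<mu> m x = ln (1 + x / (real m * (1 + \<mu>))) / ln (1 + 1 / (real m * (1 + \<mu>)))"

definition LK :: "real \<Rightarrow> nat \<Rightarrow> (real \<Rightarrow> real) \<Rightarrow> real \<Rightarrow> real" where
  "LK \<mu> n f x = lnmu \<mu> x * (\<Sum>k=0..n. bern n k (aseq \<mu> (n+1) x) *
      (real (n+1) * integral\<^sup>L (lebesgue_on {real k / real (n+1) .. real (k+1) / real (n+1)}) (fmu \<mu> f)))"

definition in_Lp :: "real \<Rightarrow> (real \<Rightarrow> real) \<Rightarrow> bool" where
  "in_Lp p f \<longleftrightarrow> f \<in> borel_measurable (lebesgue_on {0..1}) \<and>
     integrable (lebesgue_on {0..1}) (\<lambda>x. \<bar>f x\<bar> powr p)"

definition Lp_norm :: "real \<Rightarrow> (real \<Rightarrow> real) \<Rightarrow> real" where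
  "Lp_norm p f = (integral\<^sup>L (lebesgue_on {0..1}) (\<lambda>x. \<bar>f x\<bar> powr p)) powr (1 / p)"

definition C1 :: "(real \<Rightarrow> real) set" where
  "C1 = {g. \<exists>g'. continuous_on {0..1} g' \<and>
          (\<forall>x\<in>{0..1}. (g has_real_derivative g' x) (at x within {0..1}))}"

definition C1_norm :: "(real \<Rightarrow> real) \<Rightarrow> real" where
  "C1_norm g = (SUP x\<in>{0..1}. \<bar>g x\<bar>) +
               (SUP x\<in>{0..1}. \<bar>vector_derivative g (at x within {0..1})\<bar>)"

definition Kfun :: "real \<Rightarrow> (real \<Rightarrow> real) \<Rightarrow> real \<Rightarrow> real" where
  "Kfun p f t = (INF g\<in>C1. Lp_norm p (\<lambda>x. f x - g x) + t * C1_norm g)"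

definition gamma :: "real \<Rightarrow> nat \<Rightarrow> real" where
  "gamma \<mu> n = (SUP x\<in>{0..1}. \<bar>aseq \<mu> (n+1) x - x\<bar>)"

definition Tn :: "real \<Rightarrow> nat \<Rightarrow> real" where
  "Tn \<mu> n = 1 / (2 * real (n+1)) + sqrt 2 / sqrt (real (n+1)) + gamma \<mu> n"

definition Kmu :: "real \<Rightarrow> real" where
  "Kmu \<mu> = 1 + 1 / (1 + \<mu>)"

definition Lambda :: "real \<Rightarrow> nat \<Rightarrow> real" where
  "Lambda \<mu> n = ln (2 + \<mu>) / ln (1 + \<mu>) * (1 + 1 / ((1 + \<mu>) * ln (1 + \<mu>)))
                 * inverse (Kmu \<mu> + 1) * Tn \<mu> n"

end

theory Submission
  imports Defs
begin

text \<open>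
  Write \<open>C = ln (2 + \<mu>) / ln (1 + \<mu>)\<close>, \<open>K = K\<^sub>\<mu>\<close> and \<open>D = 1 + 1 / ((1 + \<mu>) ln (1 + \<mu>))\<close>.
  The operator is bounded on \<open>L\<^sup>p\<close> with norm at most \<open>C K\<close>: Jensen's inequality controls each
  cell mean of \<open>f\<^sub>\<mu>\<close> by the \<open>L\<^sup>p\<close> mass of \<open>f\<close> on the cell, convexity of \<open>|t|\<^sup>p\<close> moves the power
  inside the Bernstein average, and since \<open>a\<^sub>n\<^sub>+\<^sub>1' \<ge> 1/K\<close> the substitution \<open>y = a\<^sub>n\<^sub>+\<^sub>1(x)\<close> gives
  \<open>\<integral> p\<^sub>n\<^sub>,\<^sub>k(a\<^sub>n\<^sub>+\<^sub>1(x)) dx \<le> K/(n + 1)\<close>.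
  For \<open>g \<in> C\<^sup>1\<close> the function \<open>g\<^sub>\<mu>\<close> is Lipschitz with constant \<open>D \<parallel>g\<parallel>\<^sub>C\<^sub>1 / ln (1 + \<mu>)\<close>, and the
  first absolute moment of the Bernstein weights about \<open>x\<close> is at most \<open>(n + 1)\<^sup>-\<^sup>1\<^sup>/\<^sup>2 + \<gamma>\<^sub>n\<close>; hence
  \<open>|L g - g| \<le> C D T\<^sub>n \<parallel>g\<parallel>\<^sub>C\<^sub>1\<close> pointwise. Splitting \<open>L f - f = L (f - g) + (L g - g) + (g - f)\<close>
  and taking the infimum over \<open>g\<close> gives the estimate.
\<close>

section \<open>Convexity of the p-th power and Jensen's inequality\<close>

lemma convex_on_powr_nonneg:
  assumes "p \<ge> 1"
  shows "convex_on {0..} (\<lambda>x::real. x powr p)"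
proof (rule convex_on_linorderI)
  fix t x y :: real
  assume t: "0 < t" "t < 1" and xy: "x \<in> {0..}" "y \<in> {0..}" "x < y"
  show "((1 - t) *\<^sub>R x + t *\<^sub>R y) powr p \<le> (1 - t) * x powr p + t * y powr p"
  proof (cases "x = 0")
    case True
    have "t powr p * y powr p \<le> t * y powr p"
      using t assms by (intro mult_right_mono powr_le_one_le) auto
    then show ?thesis using True t xy by (simp add: powr_mult)
  next
    case False
    then show ?thesis using convex_onD[OF powr_convex[OF assms], of t x y] t xy by simp
  qed
qed auto

lemma convex_on_abs_powr:
  assumes "p \<ge> 1"
  shows "convex_on UNIV (\<lambda>t::real. \<bar>t\<bar> powr p)"
proof (rule convex_onI)
  fix t x y :: real
  assume t: "0 < t" "t < 1"
  have "\<bar>(1 - t) *\<^sub>R x + t *\<^sub>R y\<bar> powr p \<le> ((1 - t) * \<bar>x\<bar> + t * \<bar>y\<bar>) powr p"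
    using t assms by (intro powr_mono2) (auto intro: order.trans[OF abs_triangle_ineq] simp: abs_mult)
  also have "\<dots> \<le> (1 - t) * \<bar>x\<bar> powr p + t * \<bar>y\<bar> powr p"
    using convex_onD[OF convex_on_powr_nonneg[OF assms], of t "\<bar>x\<bar>" "\<bar>y\<bar>"] t by simp
  finally show "\<bar>(1 - t) *\<^sub>R x + t *\<^sub>R y\<bar> powr p \<le> (1 - t) * \<bar>x\<bar> powr p + t * \<bar>y\<bar> powr p" .
qed auto

lemma abs_powr_supporting_line:
  fixes c :: real
  assumes "p \<ge> 1"
  obtains s where "\<And>t. \<bar>c\<bar> powr p + s * (t - c) \<le> \<bar>t\<bar> powr p"
proof -
  have tangent: "\<bar>c\<bar> powr p + p * c powr (p - 1) * (t - c) \<le> \<bar>t\<bar> powr p" if "c > 0" for c t :: real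
  proof -
    have "((\<lambda>t. \<bar>t\<bar> powr p) has_real_derivative p * c powr (p - 1)) (at c)"
      by (rule has_field_derivative_transform_within_open[OF has_real_derivative_powr[OF that], of "{0<..}"])
         (use that in auto)
    then have "p * c powr (p - 1) * (t - c) \<le> \<bar>t\<bar> powr p - \<bar>c\<bar> powr p"
      by (intro convex_on_imp_above_tangent[OF convex_on_abs_powr[OF assms] connected_UNIV]) auto
    then show ?thesis by linarith
  qed
  consider "c > 0" | "c < 0" | "c = 0" by linarith
  then show ?thesis
  proof cases
    case 1
    then show ?thesis using tangent that by blast
  next
    case 2
    then show ?thesis using tangent[of "- c" "- t" for t] by (intro that[of "- p * (- c) powr (p - 1)"]) (auto simp: algebra_simps)
  qed (auto intro: that[of 0])
qed

lemma abs_average_powr_le: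
  fixes f :: "real \<Rightarrow> real"
  assumes p: "p \<ge> 1" and ab: "a < b" and f: "f integrable_on {a..b}"
    and fp: "(\<lambda>t. \<bar>f t\<bar> powr p) integrable_on {a..b}"
  shows "\<bar>integral {a..b} f / (b - a)\<bar> powr p \<le> integral {a..b} (\<lambda>t. \<bar>f t\<bar> powr p) / (b - a)"
proof -
  define c where "c = integral {a..b} f / (b - a)"
  obtain s where s: "\<And>t. \<bar>c\<bar> powr p + s * (t - c) \<le> \<bar>t\<bar> powr p"
    using abs_powr_supporting_line[OF p] by blast
  have "((\<lambda>t. f t - c) has_integral integral {a..b} f - (b - a) * c) {a..b}"
    using has_integral_diff[OF integrable_integral[OF f] has_integral_const_real[of c a b]] ab by simp
  then have "((\<lambda>t. \<bar>c\<bar> powr p + s * (f t - c)) has_integral (b - a) * \<bar>c\<bar> powr p) {a..b}"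
    using has_integral_add[OF has_integral_const_real[of "\<bar>c\<bar> powr p" a b] has_integral_mult_right]
      ab by (fastforce simp: c_def)
  then have "(b - a) * \<bar>c\<bar> powr p \<le> integral {a..b} (\<lambda>t. \<bar>f t\<bar> powr p)"
    by (rule has_integral_le[OF _ integrable_integral[OF fp]]) (use s in auto)
  then show ?thesis
    using ab by (simp add: c_def[symmetric] pos_le_divide_eq mult.commute)
qed

section \<open>L^p on the unit interval\<close>

lemma Lp_norm_nonneg: "0 \<le> Lp_norm p u"
  by (simp add: Lp_norm_def)

lemma Lp_norm_powr:
  assumes "p > 0"
  shows "Lp_norm p u powr p = integral\<^sup>L (lebesgue_on {0..1}) (\<lambda>x. \<bar>u x\<bar> powr p)"
  using assms by (simp add: Lp_norm_def powr_powr)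

lemma Lp_norm_le:
  assumes "p > 0" "B \<ge> 0" "integral\<^sup>L (lebesgue_on {0..1}) (\<lambda>x. \<bar>u x\<bar> powr p) \<le> B powr p"
  shows "Lp_norm p u \<le> B"
proof -
  have "Lp_norm p u \<le> (B powr p) powr (1 / p)"
    unfolding Lp_norm_def using assms by (intro powr_mono2) auto
  also have "\<dots> = B"
    using assms by (simp add: powr_powr)
  finally show ?thesis .
qed

lemma Lp_norm_minus: "Lp_norm p (\<lambda>x. - u x) = Lp_norm p u"
  by (simp add: Lp_norm_def)

lemma in_Lp_minus: "in_Lp p u \<Longrightarrow> in_Lp p (\<lambda>x. - u x)"
  by (simp add: in_Lp_def)

lemma in_Lp_continuous:
  assumes "continuous_on {0..1} u" "p > 0"
  shows "in_Lp p u"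
proof -
  have "continuous_on {0..1} (\<lambda>x. \<bar>u x\<bar> powr p)"
    using assms by (intro continuous_on_powr' continuous_intros) auto
  then show ?thesis
    using assms unfolding in_Lp_def
    by (auto intro: continuous_imp_integrable_real continuous_imp_measurable_on_sets_lebesgue)
qed

lemma in_Lp_integrable:
  assumes p: "p \<ge> 1" and u: "in_Lp p u"
  shows "integrable (lebesgue_on {0..1}) u"
proof (rule Bochner_Integration.integrable_bound)
  show "integrable (lebesgue_on {0..1}) (\<lambda>x. 1 + \<bar>u x\<bar> powr p)"
    using u continuous_imp_integrable_real[OF continuous_on_const] by (auto simp: in_Lp_def)
  have "\<bar>u x\<bar> \<le> 1 + \<bar>u x\<bar> powr p" for x
  proof (cases "\<bar>u x\<bar> \<le> 1")
    case False
    then have "\<bar>u x\<bar> powr 1 \<le> \<bar>u x\<bar> powr p"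
      using p by (intro powr_mono) auto
    then show ?thesis by simp
  qed (simp add: add_increasing2)
  then show "AE x in lebesgue_on {0..1}. norm (u x) \<le> norm (1 + \<bar>u x\<bar> powr p)"
    by auto
qed (use u in \<open>simp add: in_Lp_def\<close>)

lemma in_Lp_powr_integrable_on: "in_Lp p u \<Longrightarrow> (\<lambda>x. \<bar>u x\<bar> powr p) integrable_on {0..1}"
  by (simp add: in_Lp_def integrable_on_lebesgue_on)

lemma Lp_norm_powr_eq_integral:
  assumes "p > 0" "in_Lp p u"
  shows "Lp_norm p u powr p = integral {0..1} (\<lambda>x. \<bar>u x\<bar> powr p)"
  using assms by (simp add: Lp_norm_powr in_Lp_def lebesgue_integral_eq_integral)

lemma Lp_norm_le_uniform_bound:
  assumes p: "p > 0" and B: "B \<ge> 0" and u: "in_Lp p u"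
    and bound: "\<And>x. x \<in> {0..1} \<Longrightarrow> \<bar>u x\<bar> \<le> B"
  shows "Lp_norm p u \<le> B"
proof (rule Lp_norm_le[OF p B])
  have const: "integrable (lebesgue_on {0..1::real}) (\<lambda>x. B powr p)"
    by (rule continuous_imp_integrable_real) simp
  have "integral\<^sup>L (lebesgue_on {0..1}) (\<lambda>x. \<bar>u x\<bar> powr p)
      \<le> integral\<^sup>L (lebesgue_on {0..1::real}) (\<lambda>x. B powr p)"
    using u const bound p by (intro integral_mono) (auto simp: in_Lp_def intro: powr_mono2)
  also have "\<dots> = B powr p"
    using lebesgue_integral_eq_integral[OF const] by simp
  finally show "integral\<^sup>L (lebesgue_on {0..1}) (\<lambda>x. \<bar>u x\<bar> powr p) \<le> B powr p" .
qed

lemma in_Lp_add: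
  assumes p: "p \<ge> 1" and u: "in_Lp p u" and w: "in_Lp p w"
  shows "in_Lp p (\<lambda>x. u x + w x)"
proof -
  have measurable: "(\<lambda>x. u x + w x) \<in> borel_measurable (lebesgue_on {0..1})"
    using u w by (auto simp: in_Lp_def)
  have bound: "\<bar>u x + w x\<bar> powr p \<le> 2 powr p * (\<bar>u x\<bar> powr p + \<bar>w x\<bar> powr p)" for x
  proof -
    have "\<bar>u x + w x\<bar> powr p = \<bar>(1 - 1/2) *\<^sub>R (2 * u x) + (1/2) *\<^sub>R (2 * w x)\<bar> powr p"
      by simp
    also have "\<dots> \<le> (1 - 1/2) * \<bar>2 * u x\<bar> powr p + (1/2) * \<bar>2 * w x\<bar> powr p"
      by (rule convex_onD[OF convex_on_abs_powr[OF p]]) auto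
    also have "\<dots> = 2 powr p * (\<bar>u x\<bar> powr p + \<bar>w x\<bar> powr p) / 2"
      by (simp add: abs_mult powr_mult algebra_simps)
    also have "\<dots> \<le> 2 powr p * (\<bar>u x\<bar> powr p + \<bar>w x\<bar> powr p)"
      by simp
    finally show ?thesis .
  qed
  have "integrable (lebesgue_on {0..1}) (\<lambda>x. \<bar>u x + w x\<bar> powr p)"
  proof (rule Bochner_Integration.integrable_bound)
    show "integrable (lebesgue_on {0..1}) (\<lambda>x. 2 powr p * (\<bar>u x\<bar> powr p + \<bar>w x\<bar> powr p))"
      using u w by (auto simp: in_Lp_def)
    show "(\<lambda>x. \<bar>u x + w x\<bar> powr p) \<in> borel_measurable (lebesgue_on {0..1})"
      using measurable by measurable
    show "AE x in lebesgue_on {0..1}.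
        norm (\<bar>u x + w x\<bar> powr p) \<le> norm (2 powr p * (\<bar>u x\<bar> powr p + \<bar>w x\<bar> powr p))"
      using bound by (auto intro: order.trans[OF _ abs_ge_self])
  qed
  with measurable show ?thesis
    by (simp add: in_Lp_def)
qed

lemma Lp_norm_add_le_of_integral_bounds:
  assumes p: "p \<ge> 1" and u: "in_Lp p u" and w: "in_Lp p w"
    and A: "A > 0" "integral\<^sup>L (lebesgue_on {0..1}) (\<lambda>x. \<bar>u x\<bar> powr p) \<le> A powr p"
    and B: "B > 0" "integral\<^sup>L (lebesgue_on {0..1}) (\<lambda>x. \<bar>w x\<bar> powr p) \<le> B powr p"
  shows "Lp_norm p (\<lambda>x. u x + w x) \<le> A + B"
proof -
  let ?M = "lebesgue_on {0..1::real}"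
  define t where "t = B / (A + B)"
  have t: "0 \<le> t" "t \<le> 1" "1 - t = A / (A + B)"
    using A B by (auto simp: t_def field_simps)
  have weights: "(1 - t) * (u x / A) = u x / (A + B)" "t * (w x / B) = w x / (A + B)" for x
    using A(1) B(1) by (simp add: t(3), simp add: t_def)
  \<comment> \<open>convexity of \<open>|s|\<^sup>p\<close> at \<open>(u + w)/(A + B) = (1 - t) (u/A) + t (w/B)\<close>\<close>
  have bound: "\<bar>u x + w x\<bar> powr p
      \<le> (A + B) powr p * ((1 - t) / A powr p * \<bar>u x\<bar> powr p + t / B powr p * \<bar>w x\<bar> powr p)" for x
  proof -
    have "(u x + w x) / (A + B) = (1 - t) *\<^sub>R (u x / A) + t *\<^sub>R (w x / B)"
      by (simp only: real_scaleR_def weights add_divide_distrib)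
    then have "\<bar>(u x + w x) / (A + B)\<bar> powr p \<le> (1 - t) * \<bar>u x / A\<bar> powr p + t * \<bar>w x / B\<bar> powr p"
      using convex_onD[OF convex_on_abs_powr[OF p], of t "u x / A" "w x / B"] t by simp
    then show ?thesis
      using A B by (simp add: powr_divide field_simps)
  qed
  have iu: "integrable ?M (\<lambda>x. \<bar>u x\<bar> powr p)" and iw: "integrable ?M (\<lambda>x. \<bar>w x\<bar> powr p)"
    using u w by (auto simp: in_Lp_def)
  have "integral\<^sup>L ?M (\<lambda>x. \<bar>u x + w x\<bar> powr p) \<le> integral\<^sup>L ?M (\<lambda>x. (A + B) powr p *
      ((1 - t) / A powr p * \<bar>u x\<bar> powr p + t / B powr p * \<bar>w x\<bar> powr p))"
    using bound in_Lp_add[OF p u w] iu iw by (intro integral_mono) (auto simp: in_Lp_def)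
  also have "\<dots> = (A + B) powr p * ((1 - t) / A powr p * integral\<^sup>L ?M (\<lambda>x. \<bar>u x\<bar> powr p)
      + t / B powr p * integral\<^sup>L ?M (\<lambda>x. \<bar>w x\<bar> powr p))"
    using iu iw by simp
  also have "\<dots> \<le> (A + B) powr p * ((1 - t) / A powr p * A powr p + t / B powr p * B powr p)"
    using A B t by (intro mult_left_mono add_mono) auto
  also have "\<dots> = (A + B) powr p"
    using A B by simp
  finally show ?thesis
    using A B p by (intro Lp_norm_le) auto
qed

lemma Lp_norm_add_le:
  assumes p: "p \<ge> 1" and u: "in_Lp p u" and w: "in_Lp p w"
  shows "Lp_norm p (\<lambda>x. u x + w x) \<le> Lp_norm p u + Lp_norm p w"
proof (rule field_le_epsilon)
  fix e :: real
  assume e: "e > 0"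
  have "integral\<^sup>L (lebesgue_on {0..1}) (\<lambda>x. \<bar>v x\<bar> powr p) \<le> (Lp_norm p v + e/2) powr p" for v
    using p e Lp_norm_nonneg[of p v] by (subst Lp_norm_powr[symmetric]) (auto intro!: powr_mono2)
  then have "Lp_norm p (\<lambda>x. u x + w x) \<le> (Lp_norm p u + e/2) + (Lp_norm p w + e/2)"
    using e Lp_norm_nonneg[of p u] Lp_norm_nonneg[of p w]
    by (intro Lp_norm_add_le_of_integral_bounds[OF p u w]) auto
  then show "Lp_norm p (\<lambda>x. u x + w x) \<le> Lp_norm p u + Lp_norm p w + e"
    by simp
qed

section \<open>Cells and Bernstein polynomials\<close>

definition cell :: "nat \<Rightarrow> nat \<Rightarrow> real set" where
  "cell n k = {real k / real (n + 1) .. real (k + 1) / real (n + 1)}"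

definition cell_mean :: "nat \<Rightarrow> (real \<Rightarrow> real) \<Rightarrow> nat \<Rightarrow> real" where
  "cell_mean n u k = real (n + 1) * integral\<^sup>L (lebesgue_on (cell n k)) u"

lemma cell_subset: "k \<le> n \<Longrightarrow> cell n k \<subseteq> {0..1}"
  by (auto simp: cell_def field_simps)

lemma cell_length: "real (k + 1) / real (n + 1) - real k / real (n + 1) = 1 / real (n + 1)"
  by (simp add: field_simps)

lemma integral_cell_const: "integral (cell n k) (\<lambda>_. c) = c / real (n + 1)"
  using cell_length[of k n] by (simp add: cell_def divide_right_mono)

lemma integrable_on_cell:
  fixes f :: "real \<Rightarrow> real"
  assumes "f integrable_on {0..1}" "k \<le> n"
  shows "f integrable_on cell n k"
  using integrable_subinterval_real[OF assms(1) cell_subset[OF assms(2), unfolded cell_def]]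
  by (simp add: cell_def)

lemma integrable_lebesgue_on_cell:
  fixes u :: "real \<Rightarrow> real"
  assumes "integrable (lebesgue_on {0..1}) u" "k \<le> n"
  shows "integrable (lebesgue_on (cell n k)) u"
  using integrable_subinterval[OF assms(1) cell_subset[OF assms(2), unfolded cell_def]]
  by (simp add: cell_def)

lemma sum_integral_cells:
  fixes f :: "real \<Rightarrow> real"
  assumes f: "f integrable_on {0..1}"
  shows "(\<Sum>k\<le>n. integral (cell n k) f) = integral {0..1} f"
proof -
  have "(\<Sum>k<j. integral (cell n k) f) = integral {0..real j / real (n + 1)} f" if "j \<le> n + 1" for j
    using that
  proof (induction j)
    case (Suc j)
    have "integral {0..real j / real (n + 1)} f + integral (cell n j) f
        = integral {0..real (j + 1) / real (n + 1)} f"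
      unfolding cell_def using Suc.prems
      by (intro Henstock_Kurzweil_Integration.integral_combine integrable_subinterval_real[OF f])
         (auto simp: divide_right_mono)
    then show ?case
      using Suc by simp
  qed simp
  from this[of "n + 1"] show ?thesis
    by (simp add: lessThan_Suc_atMost)
qed

lemma cell_mean_eq_integral:
  assumes "integrable (lebesgue_on {0..1}) u" "k \<le> n"
  shows "cell_mean n u k = real (n + 1) * integral (cell n k) u"
  using integrable_lebesgue_on_cell[OF assms] unfolding cell_mean_def
  by (simp add: lebesgue_integral_eq_integral cell_def)

lemma abs_cell_mean_powr_le:
  assumes p: "p \<ge> 1" and u: "in_Lp p u" and k: "k \<le> n"
  shows "\<bar>cell_mean n u k\<bar> powr p \<le> real (n + 1) * integral (cell n k) (\<lambda>t. \<bar>u t\<bar> powr p)"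
proof -
  have "u integrable_on {0..1}"
    using integrable_on_lebesgue_on[OF in_Lp_integrable[OF p u]] by simp
  then have "u integrable_on cell n k" "(\<lambda>t. \<bar>u t\<bar> powr p) integrable_on cell n k"
    using integrable_on_cell in_Lp_powr_integrable_on[OF u] k by auto
  then have "\<bar>integral (cell n k) u / (1 / real (n + 1))\<bar> powr p
      \<le> integral (cell n k) (\<lambda>t. \<bar>u t\<bar> powr p) / (1 / real (n + 1))"
    using abs_average_powr_le[OF p, of "real k / real (n + 1)" "real (k + 1) / real (n + 1)"]
    unfolding cell_def cell_length by (simp add: divide_strict_right_mono)
  then show ?thesis
    using cell_mean_eq_integral[OF in_Lp_integrable[OF p u] k] by (simp add: mult.commute)
qed

lemma has_integral_Bernstein:
  assumes "k \<le> n"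
  shows "(Bernstein n k has_integral 1 / real (n + 1)) {0..1}"
proof -
  have "Gamma (real k + 1) = fact k" "Gamma (real (n - k) + 1) = fact (n - k)"
    "Gamma (real k + 1 + (real (n - k) + 1)) = fact (n + 1)"
    using Gamma_fact[of k] Gamma_fact[of "n - k"] Gamma_fact[of "n + 1"] assms
    by (simp_all add: add.commute)
  then have "((\<lambda>t. t powr real k * (1 - t) powr real (n - k)) has_integral
      fact k * fact (n - k) / fact (n + 1)) {0..1}"
    using has_integral_Beta_real[of "real k + 1" "real (n - k) + 1"] by (simp add: Beta_def)
  then have "((\<lambda>t::real. t ^ k * (1 - t) ^ (n - k)) has_integral fact k * fact (n - k) / fact (n + 1)) {0..1}"
    by (rule has_integral_spike_finite[rotated 2, where S = "{0, 1}"]) (auto simp: powr_realpow)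
  then have "((\<lambda>t. real (n choose k) * (t ^ k * (1 - t) ^ (n - k))) has_integral
      real (n choose k) * (fact k * fact (n - k) / fact (n + 1))) {0..1}"
    by (rule has_integral_mult_right)
  moreover have "Bernstein n k = (\<lambda>t. real (n choose k) * (t ^ k * (1 - t) ^ (n - k)))"
    by (simp add: fun_eq_iff Bernstein_def)
  moreover have "real (n choose k) * (fact k * fact (n - k) / fact (n + 1)) = 1 / real (n + 1)"
    using assms by (simp add: binomial_fact divide_simps)
  ultimately show ?thesis
    by simp
qed

lemma sum_Bernstein_sq_dev_le:
  assumes a: "0 \<le> a" "a \<le> 1"
  shows "(\<Sum>k\<le>n. Bernstein n k a * (real k / real (n + 1) - a)\<^sup>2) \<le> 1 / real (n + 1)"
proof -
  define m where "m = real (n + 1)"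
  have m: "m > 0"
    by (simp add: m_def)
  have "Bernstein n k a * (real k / m - a)\<^sup>2 = real k * (real k - 1) * Bernstein n k a / m\<^sup>2
      + real k * Bernstein n k a * (1 / m\<^sup>2 - 2 * a / m) + a\<^sup>2 * Bernstein n k a" for k
    using m by (simp add: field_simps power2_eq_square)
  \<comment> \<open>the first three moments of the Bernstein weights: \<open>sum_Bernstein\<close>, \<open>sum_k_Bernstein\<close>, \<open>sum_kk_Bernstein\<close>\<close>
  then have "(\<Sum>k\<le>n. Bernstein n k a * (real k / m - a)\<^sup>2)
      = real n * (real n - 1) * a\<^sup>2 / m\<^sup>2 + real n * a * (1 / m\<^sup>2 - 2 * a / m) + a\<^sup>2"
    by (simp add: sum.distrib flip: sum_divide_distrib sum_distrib_left sum_distrib_right)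
  also have "\<dots> = (real n * (a - a\<^sup>2) + a\<^sup>2) / m\<^sup>2"
    using m by (simp add: divide_simps power2_eq_square) (simp add: m_def algebra_simps)
  also have "\<dots> \<le> m / m\<^sup>2"
  proof (rule divide_right_mono)
    have "a\<^sup>2 \<le> 1"
      using a by (simp add: power_le_one)
    have "a - a\<^sup>2 \<le> 1"
      using a(2) zero_le_power2[of a] by linarith
    then show "real n * (a - a\<^sup>2) + a\<^sup>2 \<le> m"
      using mult_left_mono[OF \<open>a - a\<^sup>2 \<le> 1\<close>, of "real n"] \<open>a\<^sup>2 \<le> 1\<close> by (simp add: m_def)
  qed simp
  also have "\<dots> = 1 / m"
    using m by (simp add: power2_eq_square)
  finally show ?thesis
    by (simp add: m_def)
qed

lemma sum_Bernstein_abs_dev_le: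
  assumes a: "0 \<le> a" "a \<le> 1"
  shows "(\<Sum>k\<le>n. Bernstein n k a * \<bar>real k / real (n + 1) - a\<bar>) \<le> 1 / sqrt (real (n + 1))"
proof -
  have "(\<Sum>k\<le>n. Bernstein n k a *\<^sub>R \<bar>real k / real (n + 1) - a\<bar>)\<^sup>2
      \<le> (\<Sum>k\<le>n. Bernstein n k a * \<bar>real k / real (n + 1) - a\<bar>\<^sup>2)"
    using a by (intro convex_on_sum[OF _ _ convex_power2]) (auto intro: Bernstein_nonneg)
  also have "\<dots> \<le> 1 / real (n + 1)"
    using sum_Bernstein_sq_dev_le[OF a, of n] by simp
  finally have "(\<Sum>k\<le>n. Bernstein n k a * \<bar>real k / real (n + 1) - a\<bar>) \<le> sqrt (1 / real (n + 1))"
    by (intro real_le_rsqrt) simp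
  then show ?thesis
    by (simp add: real_sqrt_divide)
qed

section \<open>The nodes \<open>a\<^sub>n\<^sub>+\<^sub>1\<close>\<close>

definition log_ratio :: "real \<Rightarrow> real \<Rightarrow> real" where
  "log_ratio c x = ln (1 + c * x) / ln (1 + c)"

lemma aseq_eq_log_ratio: "aseq \<mu> m = log_ratio (1 / (real m * (1 + \<mu>)))"
  by (simp add: fun_eq_iff aseq_def log_ratio_def)

lemma log_ratio_0: "log_ratio c 0 = 0"
  by (simp add: log_ratio_def)

lemma log_ratio_1: "c > 0 \<Longrightarrow> log_ratio c 1 = 1"
  by (simp add: log_ratio_def)

lemma log_ratio_bounds:
  assumes "c > 0" "0 \<le> x" "x \<le> 1"
  shows "log_ratio c x \<in> {0..1}"
proof -
  have "0 \<le> ln (1 + c * x)" "ln (1 + c * x) \<le> ln (1 + c)"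
    using assms by (auto intro: ln_mono simp: mult_left_le add_pos_nonneg)
  then show ?thesis
    using assms by (simp add: log_ratio_def)
qed

lemma has_real_derivative_log_ratio:
  assumes "c > 0" "x \<ge> 0"
  shows "(log_ratio c has_real_derivative c / ((1 + c * x) * ln (1 + c))) (at x)"
proof -
  have "1 + c * x > 0"
    using assms by (simp add: add_pos_nonneg)
  then show ?thesis
    unfolding log_ratio_def[abs_def] using assms by (auto intro!: derivative_eq_intros)
qed

lemma log_ratio_deriv_ge:
  fixes c x :: real
  assumes "c > 0" "0 \<le> x" "x \<le> 1"
  shows "1 / (1 + c) \<le> c / ((1 + c * x) * ln (1 + c))"
proof -
  have "1 + c * x \<le> 1 + c" "ln (1 + c) \<le> c"
    using assms by (simp_all add: mult_left_le ln_add_one_self_le_self)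
  then have "(1 + c * x) * ln (1 + c) \<le> (1 + c) * c"
    using assms by (intro mult_mono) auto
  moreover have "0 < (1 + c * x) * ln (1 + c)"
    using assms by (simp add: add_pos_nonneg)
  ultimately show ?thesis
    using assms by (simp add: field_simps)
qed

lemma integral_compose_le_of_deriv_ge:
  fixes \<phi> h :: "real \<Rightarrow> real"
  assumes \<delta>: "\<delta> > 0"
    and h: "continuous_on {0..1} h" "\<And>y. y \<in> {0..1} \<Longrightarrow> 0 \<le> h y"
    and \<phi>: "\<phi> ` {0..1} \<subseteq> {0..1}" "\<phi> 0 = 0" "\<phi> 1 = 1"
    and \<phi>': "\<And>x. x \<in> {0..1} \<Longrightarrow> (\<phi> has_real_derivative \<phi>' x) (at x within {0..1})"
      "\<And>x. x \<in> {0..1} \<Longrightarrow> \<delta> \<le> \<phi>' x"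
  shows "(\<lambda>x. h (\<phi> x)) integrable_on {0..1}" "integral {0..1} (\<lambda>x. h (\<phi> x)) \<le> integral {0..1} h / \<delta>"
proof -
  have "continuous_on {0..1} (\<lambda>x. h (\<phi> x))"
    using continuous_on_compose2[OF h(1) DERIV_continuous_on[OF \<phi>'(1)] \<phi>(1)] .
  then show int: "(\<lambda>x. h (\<phi> x)) integrable_on {0..1}"
    by (rule integrable_continuous_interval)
  have "((\<lambda>x. \<phi>' x *\<^sub>R h (\<phi> x)) has_integral integral {0..1} h) {0..1}"
    using has_integral_substitution[of 0 1 \<phi> 0 1 h \<phi>'] \<phi> \<phi>' h(1) by simp
  then have "((\<lambda>x. \<phi>' x * h (\<phi> x) / \<delta>) has_integral integral {0..1} h / \<delta>) {0..1}"
    by (simp add: has_integral_divide)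
  then show "integral {0..1} (\<lambda>x. h (\<phi> x)) \<le> integral {0..1} h / \<delta>"
  proof (rule has_integral_le[OF integrable_integral[OF int]])
    fix x :: real
    assume x: "x \<in> {0..1}"
    then have "\<phi> x \<in> {0..1}"
      using \<phi>(1) by blast
    then have "1 * h (\<phi> x) \<le> \<phi>' x / \<delta> * h (\<phi> x)"
      using \<phi>'(2)[OF x] \<delta> by (intro mult_right_mono h(2)) auto
    then show "h (\<phi> x) \<le> \<phi>' x * h (\<phi> x) / \<delta>"
      by simp
  qed
qed

lemma aseq_in_unit:
  assumes "\<mu> > 0" "x \<in> {0..1}"
  shows "aseq \<mu> (n + 1) x \<in> {0..1}"
  using log_ratio_bounds[of "1 / (real (n + 1) * (1 + \<mu>))" x] assms
  by (simp add: aseq_eq_log_ratio)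

lemma continuous_on_aseq: "\<mu> > 0 \<Longrightarrow> continuous_on {0..1} (aseq \<mu> (n + 1))"
  unfolding aseq_eq_log_ratio
  by (rule DERIV_continuous_on[OF has_field_derivative_at_within[OF has_real_derivative_log_ratio]])
     auto

lemma integral_Bernstein_aseq_le:
  assumes \<mu>: "\<mu> > 0" and k: "k \<le> n"
  shows "(\<lambda>x. Bernstein n k (aseq \<mu> (n + 1) x)) integrable_on {0..1}"
    "integral {0..1} (\<lambda>x. Bernstein n k (aseq \<mu> (n + 1) x)) \<le> Kmu \<mu> / real (n + 1)"
proof -
  define c where "c = 1 / (real (n + 1) * (1 + \<mu>))"
  have c: "c > 0" "1 + c \<le> Kmu \<mu>"
    using \<mu> by (auto simp: c_def Kmu_def intro!: divide_left_mono)
  have "continuous_on {0..1} (Bernstein n k)"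
    unfolding Bernstein_def by (intro continuous_intros)
  moreover have "log_ratio c ` {0..1} \<subseteq> {0..1}"
    using log_ratio_bounds[OF c(1)] by auto
  moreover have "1 / Kmu \<mu> \<le> c / ((1 + c * x) * ln (1 + c))" if "x \<in> {0..1}" for x
    using log_ratio_deriv_ge[OF c(1), of x] c that
    by (auto intro: order.trans[OF divide_left_mono])
  moreover have "Kmu \<mu> > 0"
    using \<mu> by (simp add: Kmu_def add_pos_pos)
  ultimately have "(\<lambda>x. Bernstein n k (log_ratio c x)) integrable_on {0..1}"
    "integral {0..1} (\<lambda>x. Bernstein n k (log_ratio c x)) \<le> integral {0..1} (Bernstein n k) / (1 / Kmu \<mu>)"
    using integral_compose_le_of_deriv_ge[where \<phi> = "log_ratio c" and h = "Bernstein n k"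
        and \<phi>' = "\<lambda>x. c / ((1 + c * x) * ln (1 + c))" and \<delta> = "1 / Kmu \<mu>"]
      c(1) log_ratio_0 log_ratio_1 Bernstein_nonneg
      has_field_derivative_at_within[OF has_real_derivative_log_ratio]
    by auto
  then show "(\<lambda>x. Bernstein n k (aseq \<mu> (n + 1) x)) integrable_on {0..1}"
    "integral {0..1} (\<lambda>x. Bernstein n k (aseq \<mu> (n + 1) x)) \<le> Kmu \<mu> / real (n + 1)"
    using integral_unique[OF has_integral_Bernstein[OF k]]
    by (simp_all add: aseq_eq_log_ratio c_def)
qed

lemma abs_aseq_sub_le_gamma:
  assumes "\<mu> > 0" "x \<in> {0..1}"
  shows "\<bar>aseq \<mu> (n + 1) x - x\<bar> \<le> gamma \<mu> n"
proof -
  have "\<bar>aseq \<mu> (n + 1) y - y\<bar> \<le> 1" if "y \<in> {0..1}" for y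
    using aseq_in_unit[OF assms(1) that, where n = n] that by auto
  then have "bdd_above ((\<lambda>x. \<bar>aseq \<mu> (n + 1) x - x\<bar>) ` {0..1})"
    by (intro bdd_aboveI[where M = 1]) auto
  then show ?thesis
    unfolding gamma_def using assms(2) by (rule cSUP_upper2) simp
qed

lemma sum_Bernstein_aseq_abs_dev_le:
  assumes \<mu>: "\<mu> > 0" and x: "x \<in> {0..1}"
  shows "(\<Sum>k\<le>n. Bernstein n k (aseq \<mu> (n + 1) x) * \<bar>real k / real (n + 1) - x\<bar>)
    \<le> 1 / sqrt (real (n + 1)) + gamma \<mu> n"
proof -
  define a where "a = aseq \<mu> (n + 1) x"
  have a: "0 \<le> a" "a \<le> 1"
    using aseq_in_unit[OF \<mu> x] by (auto simp: a_def)
  have "(\<Sum>k\<le>n. Bernstein n k a * \<bar>real k / real (n + 1) - x\<bar>)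
      \<le> (\<Sum>k\<le>n. Bernstein n k a * (\<bar>real k / real (n + 1) - a\<bar> + \<bar>a - x\<bar>))"
    using a by (intro sum_mono mult_left_mono) (auto intro: Bernstein_nonneg)
  also have "\<dots> = (\<Sum>k\<le>n. Bernstein n k a * \<bar>real k / real (n + 1) - a\<bar>) + \<bar>a - x\<bar>"
    by (simp add: distrib_left sum.distrib flip: sum_distrib_right)
  also have "\<dots> \<le> 1 / sqrt (real (n + 1)) + gamma \<mu> n"
    using sum_Bernstein_abs_dev_le[OF a, of n] abs_aseq_sub_le_gamma[OF \<mu> x, of n]
    by (simp add: a_def)
  finally show ?thesis
    by (simp add: a_def)
qed

lemma Tn_nonneg: "\<mu> > 0 \<Longrightarrow> 0 \<le> Tn \<mu> n"
  using abs_aseq_sub_le_gamma[of \<mu> 0 n] by (simp add: Tn_def)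

lemma inverse_plus_inverse_sqrt_le:
  fixes m :: real
  assumes "m \<ge> 2"
  shows "1 / m + 1 / sqrt m \<le> 1 / (2 * m) + sqrt 2 / sqrt m"
proof -
  define s where "s = sqrt m"
  have s2: "s * s = m"
    using assms by (simp add: s_def)
  have r2: "sqrt 2 \<ge> 1.4"
    by (rule real_le_rsqrt) (simp add: power2_eq_square)
  then have s: "s \<ge> 1.4"
    using real_sqrt_le_mono[OF assms] unfolding s_def by linarith
  then have "1 / (2 * s) \<le> 1 / (2 * 1.4)"
    by (intro divide_left_mono) auto
  then have "1 / (2 * s) \<le> sqrt 2 - 1"
    using r2 by simp
  then have "1 / (2 * s) * (1 / s) \<le> (sqrt 2 - 1) * (1 / s)"
    using s by (intro mult_right_mono) auto
  then have "1 / (2 * (s * s)) \<le> sqrt 2 / s - 1 / s"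
    by (simp add: algebra_simps)
  then have "1 / (s * s) + 1 / s \<le> 1 / (2 * (s * s)) + sqrt 2 / s"
    by (simp add: field_simps)
  then show ?thesis
    unfolding s2[symmetric] using assms by (simp add: s_def)
qed

lemma Tn_ge:
  assumes "n \<ge> 1"
  shows "1 / real (n + 1) + 1 / sqrt (real (n + 1)) + gamma \<mu> n \<le> Tn \<mu> n"
  using inverse_plus_inverse_sqrt_le[of "real (n + 1)"] assms by (simp add: Tn_def)

section \<open>Boundedness of the operator on L^p\<close>

lemma lnmu_bounds:
  assumes "\<mu> > 0" "x \<in> {0..1}"
  shows "0 < ln (1 + \<mu>)" "ln (1 + \<mu>) \<le> lnmu \<mu> x" "lnmu \<mu> x \<le> ln (2 + \<mu>)" "0 < lnmu \<mu> x"
  using assms by (auto simp: lnmu_def)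

lemma continuous_on_lnmu: "\<mu> > 0 \<Longrightarrow> continuous_on {0..1} (lnmu \<mu>)"
  unfolding lnmu_def[abs_def] by (intro continuous_intros) auto

lemma has_real_derivative_lnmu:
  assumes "\<mu> > 0" "x \<ge> 0"
  shows "(lnmu \<mu> has_real_derivative 1 / (1 + \<mu> + x)) (at x)"
  unfolding lnmu_def[abs_def] using assms by (auto intro!: derivative_eq_intros)

lemma LK_eq:
  "LK \<mu> n f x = lnmu \<mu> x * (\<Sum>k\<le>n. Bernstein n k (aseq \<mu> (n + 1) x) * cell_mean n (fmu \<mu> f) k)"
  by (simp add: LK_def cell_mean_def cell_def bern_def Bernstein_def atLeast0AtMost)

lemma continuous_on_LK: "\<mu> > 0 \<Longrightarrow> continuous_on {0..1} (LK \<mu> n u)"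
  unfolding LK_eq[abs_def] Bernstein_def
  by (intro continuous_intros continuous_on_lnmu continuous_on_compose2[OF _ continuous_on_aseq, of UNIV])
     auto

lemma abs_fmu_le:
  assumes "\<mu> > 0" "x \<in> {0..1}"
  shows "\<bar>fmu \<mu> h x\<bar> \<le> \<bar>h x\<bar> / ln (1 + \<mu>)"
  using lnmu_bounds[OF assms] by (simp add: fmu_def frac_le)

lemma abs_fmu_powr_le:
  assumes "\<mu> > 0" "p > 0" "x \<in> {0..1}"
  shows "\<bar>fmu \<mu> h x\<bar> powr p \<le> \<bar>h x\<bar> powr p / ln (1 + \<mu>) powr p"
  using abs_fmu_le[OF assms(1,3)] lnmu_bounds[OF assms(1,3)] assms(2)
  by (simp add: powr_mono2 flip: powr_divide)

lemma continuous_on_fmu: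
  assumes "\<mu> > 0" "continuous_on {0..1} g"
  shows "continuous_on {0..1} (fmu \<mu> g)"
proof -
  have "lnmu \<mu> y \<noteq> 0" if "y \<in> {0..1}" for y
    using lnmu_bounds(4)[OF assms(1) that] by simp
  then show ?thesis
    using assms continuous_on_lnmu[OF assms(1)] unfolding fmu_def[abs_def]
    by (intro continuous_intros) auto
qed

lemma in_Lp_fmu:
  assumes \<mu>: "\<mu> > 0" and p: "p > 0" and h: "in_Lp p h"
  shows "in_Lp p (fmu \<mu> h)"
proof -
  let ?M = "lebesgue_on {0..1::real}"
  have "lnmu \<mu> \<in> borel_measurable ?M"
    using continuous_on_lnmu[OF \<mu>] by (intro continuous_imp_measurable_on_sets_lebesgue) auto
  moreover have "h \<in> borel_measurable ?M"
    using h by (simp add: in_Lp_def)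
  ultimately have measurable: "fmu \<mu> h \<in> borel_measurable ?M"
    unfolding fmu_def[abs_def] by measurable
  have "integrable ?M (\<lambda>x. \<bar>fmu \<mu> h x\<bar> powr p)"
  proof (rule Bochner_Integration.integrable_bound)
    show "integrable ?M (\<lambda>x. \<bar>h x\<bar> powr p / ln (1 + \<mu>) powr p)"
      using h by (simp add: in_Lp_def)
    show "(\<lambda>x. \<bar>fmu \<mu> h x\<bar> powr p) \<in> borel_measurable ?M"
      using measurable by measurable
    show "AE x in ?M. norm (\<bar>fmu \<mu> h x\<bar> powr p) \<le> norm (\<bar>h x\<bar> powr p / ln (1 + \<mu>) powr p)"
      using abs_fmu_powr_le[OF \<mu> p] by (auto intro: order.trans[OF _ abs_ge_self])
  qed
  with measurable show ?thesis
    by (simp add: in_Lp_def)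
qed

lemma cell_mean_add:
  assumes "integrable (lebesgue_on {0..1}) u" "integrable (lebesgue_on {0..1}) w" "k \<le> n"
  shows "cell_mean n (\<lambda>x. u x + w x) k = cell_mean n u k + cell_mean n w k"
  using integrable_lebesgue_on_cell[OF assms(1,3)] integrable_lebesgue_on_cell[OF assms(2,3)]
  by (simp add: cell_mean_def distrib_left)

lemma LK_add:
  assumes \<mu>: "\<mu> > 0" and p: "p \<ge> 1" and u: "in_Lp p u" and w: "in_Lp p w"
  shows "LK \<mu> n (\<lambda>x. u x + w x) x = LK \<mu> n u x + LK \<mu> n w x"
proof -
  have "fmu \<mu> (\<lambda>x. u x + w x) = (\<lambda>x. fmu \<mu> u x + fmu \<mu> w x)"
    by (simp add: fun_eq_iff fmu_def add_divide_distrib)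
  moreover have "integrable (lebesgue_on {0..1}) (fmu \<mu> u)" "integrable (lebesgue_on {0..1}) (fmu \<mu> w)"
    using \<mu> p u w by (auto intro!: in_Lp_integrable[OF p] in_Lp_fmu)
  ultimately show ?thesis
    by (simp add: LK_eq cell_mean_add algebra_simps sum.distrib)
qed

lemma abs_cell_mean_fmu_powr_le:
  assumes \<mu>: "\<mu> > 0" and p: "p \<ge> 1" and h: "in_Lp p h" and k: "k \<le> n"
  shows "\<bar>cell_mean n (fmu \<mu> h) k\<bar> powr p
    \<le> real (n + 1) * integral (cell n k) (\<lambda>t. \<bar>h t\<bar> powr p) / ln (1 + \<mu>) powr p"
proof -
  have fh: "in_Lp p (fmu \<mu> h)"
    using in_Lp_fmu[OF \<mu> _ h] p by simp
  have integral_le: "integral (cell n k) (\<lambda>t. \<bar>fmu \<mu> h t\<bar> powr p)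
      \<le> integral (cell n k) (\<lambda>t. \<bar>h t\<bar> powr p / ln (1 + \<mu>) powr p)"
    using in_Lp_powr_integrable_on[OF fh] in_Lp_powr_integrable_on[OF h] abs_fmu_powr_le[OF \<mu>] p cell_subset[OF k]
    by (intro integral_le integrable_on_cell[OF _ k] integrable_on_divide) auto
  then have "real (n + 1) * integral (cell n k) (\<lambda>t. \<bar>fmu \<mu> h t\<bar> powr p)
      \<le> real (n + 1) * integral (cell n k) (\<lambda>t. \<bar>h t\<bar> powr p) / ln (1 + \<mu>) powr p"
    using mult_left_mono[OF integral_le, of "real (n + 1)"] by simp
  with abs_cell_mean_powr_le[OF p fh k] show ?thesis
    by linarith
qed

lemma abs_LK_powr_le:
  assumes \<mu>: "\<mu> > 0" and p: "p \<ge> 1" and h: "in_Lp p h" and x: "x \<in> {0..1}"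
  shows "\<bar>LK \<mu> n h x\<bar> powr p \<le> (ln (2 + \<mu>) / ln (1 + \<mu>)) powr p *
    (\<Sum>k\<le>n. Bernstein n k (aseq \<mu> (n + 1) x) * (real (n + 1) * integral (cell n k) (\<lambda>t. \<bar>h t\<bar> powr p)))"
proof -
  define a where "a = aseq \<mu> (n + 1) x"
  define J where "J k = real (n + 1) * integral (cell n k) (\<lambda>t. \<bar>h t\<bar> powr p)" for k
  have a: "0 \<le> a" "a \<le> 1"
    using aseq_in_unit[OF \<mu> x] by (auto simp: a_def)
  note L = lnmu_bounds[OF \<mu> x]
  have "\<bar>LK \<mu> n h x\<bar> powr p
      = lnmu \<mu> x powr p * \<bar>\<Sum>k\<le>n. Bernstein n k a *\<^sub>R cell_mean n (fmu \<mu> h) k\<bar> powr p"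
    using L by (simp add: LK_eq a_def abs_mult powr_mult)
  also have "\<dots> \<le> ln (2 + \<mu>) powr p * (\<Sum>k\<le>n. Bernstein n k a * \<bar>cell_mean n (fmu \<mu> h) k\<bar> powr p)"
  proof (rule mult_mono)
    show "lnmu \<mu> x powr p \<le> ln (2 + \<mu>) powr p"
      using L p by (intro powr_mono2) auto
    show "\<bar>\<Sum>k\<le>n. Bernstein n k a *\<^sub>R cell_mean n (fmu \<mu> h) k\<bar> powr p
        \<le> (\<Sum>k\<le>n. Bernstein n k a * \<bar>cell_mean n (fmu \<mu> h) k\<bar> powr p)"
      using a by (intro convex_on_sum[OF _ _ convex_on_abs_powr[OF p]]) (auto intro: Bernstein_nonneg)
  qed auto
  also have "\<dots> \<le> ln (2 + \<mu>) powr p * (\<Sum>k\<le>n. Bernstein n k a * (J k / ln (1 + \<mu>) powr p))"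
    using abs_cell_mean_fmu_powr_le[OF \<mu> p h] a unfolding J_def
    by (intro mult_left_mono sum_mono) (auto intro: Bernstein_nonneg)
  also have "\<dots> = (ln (2 + \<mu>) / ln (1 + \<mu>)) powr p * (\<Sum>k\<le>n. Bernstein n k a * J k)"
    using L by (simp add: powr_divide sum_divide_distrib[symmetric])
  finally show ?thesis
    by (simp add: a_def J_def)
qed

lemma integral_abs_LK_powr_le:
  assumes \<mu>: "\<mu> > 0" and p: "p \<ge> 1" and h: "in_Lp p h"
  shows "integral {0..1} (\<lambda>x. \<bar>LK \<mu> n h x\<bar> powr p)
    \<le> (ln (2 + \<mu>) / ln (1 + \<mu>)) powr p * Kmu \<mu> * integral {0..1} (\<lambda>t. \<bar>h t\<bar> powr p)"
proof -
  define C where "C = (ln (2 + \<mu>) / ln (1 + \<mu>)) powr p"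
  define J where "J k = integral (cell n k) (\<lambda>t. \<bar>h t\<bar> powr p)" for k
  define B where "B k x = Bernstein n k (aseq \<mu> (n + 1) x)" for k x
  have J: "0 \<le> J k" if "k \<le> n" for k
    unfolding J_def using integrable_on_cell[OF in_Lp_powr_integrable_on[OF h] that]
    by (intro integral_nonneg) auto
  have B: "B k integrable_on {0..1}" "integral {0..1} (B k) \<le> Kmu \<mu> / real (n + 1)" if "k \<le> n" for k
    using integral_Bernstein_aseq_le[OF \<mu> that] by (simp_all add: B_def[abs_def])
  have cont: "continuous_on {0..1} (\<lambda>x. \<bar>LK \<mu> n h x\<bar> powr p)"
    using p by (intro continuous_on_powr' continuous_intros continuous_on_LK[OF \<mu>]) auto
  have int: "(\<lambda>x. C * (\<Sum>k\<le>n. B k x * (real (n + 1) * J k))) integrable_on {0..1}"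
    using B(1) by (intro integrable_on_mult_right integrable_sum integrable_on_mult_left) auto
  have "integral {0..1} (\<lambda>x. \<bar>LK \<mu> n h x\<bar> powr p)
      \<le> integral {0..1} (\<lambda>x. C * (\<Sum>k\<le>n. B k x * (real (n + 1) * J k)))"
    using abs_LK_powr_le[OF \<mu> p h]
    by (intro integral_le[OF integrable_continuous_interval[OF cont] int]) (auto simp: C_def B_def J_def)
  also have "\<dots> = C * (\<Sum>k\<le>n. integral {0..1} (B k) * (real (n + 1) * J k))"
  proof -
    have "integral {0..1} (\<lambda>x. \<Sum>k\<le>n. B k x * (real (n + 1) * J k))
        = (\<Sum>k\<le>n. integral {0..1} (\<lambda>x. B k x * (real (n + 1) * J k)))"
      using B(1) by (intro integral_sum) (auto intro: integrable_on_mult_left)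
    then show ?thesis
      by simp
  qed
  also have "\<dots> \<le> C * (\<Sum>k\<le>n. Kmu \<mu> / real (n + 1) * (real (n + 1) * J k))"
    using B(2) J by (intro mult_left_mono sum_mono mult_right_mono) (auto simp: C_def)
  also have "\<dots> = C * Kmu \<mu> * (\<Sum>k\<le>n. J k)"
    by (simp add: sum_distrib_left mult.assoc)
  also have "(\<Sum>k\<le>n. J k) = integral {0..1} (\<lambda>t. \<bar>h t\<bar> powr p)"
    unfolding J_def using in_Lp_powr_integrable_on[OF h] by (rule sum_integral_cells)
  finally show ?thesis
    by (simp add: C_def)
qed

lemma Lp_norm_LK_le:
  assumes \<mu>: "\<mu> > 0" and p: "p \<ge> 1" and h: "in_Lp p h"
  shows "Lp_norm p (LK \<mu> n h) \<le> ln (2 + \<mu>) / ln (1 + \<mu>) * Kmu \<mu> * Lp_norm p h"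
proof (rule Lp_norm_le)
  define C where "C = ln (2 + \<mu>) / ln (1 + \<mu>)"
  have C: "C > 0" and K: "Kmu \<mu> \<ge> 1"
    using \<mu> by (simp_all add: C_def Kmu_def)
  have "integral\<^sup>L (lebesgue_on {0..1}) (\<lambda>x. \<bar>LK \<mu> n h x\<bar> powr p)
      = integral {0..1} (\<lambda>x. \<bar>LK \<mu> n h x\<bar> powr p)"
    using in_Lp_continuous[OF continuous_on_LK[OF \<mu>], of p] p
    by (simp add: in_Lp_def lebesgue_integral_eq_integral)
  also have "\<dots> \<le> C powr p * Kmu \<mu> * Lp_norm p h powr p"
    using integral_abs_LK_powr_le[OF \<mu> p h] Lp_norm_powr_eq_integral[of p h] p h by (simp add: C_def)
  also have "\<dots> \<le> C powr p * Kmu \<mu> powr p * Lp_norm p h powr p"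
    using K p powr_mono[of 1 p "Kmu \<mu>"] by (intro mult_right_mono mult_left_mono) auto
  also have "\<dots> = (C * Kmu \<mu> * Lp_norm p h) powr p"
    using C K Lp_norm_nonneg[of p h] by (simp add: powr_mult)
  finally show "integral\<^sup>L (lebesgue_on {0..1}) (\<lambda>x. \<bar>LK \<mu> n h x\<bar> powr p)
      \<le> (C * Kmu \<mu> * Lp_norm p h) powr p" .
  show "0 \<le> C * Kmu \<mu> * Lp_norm p h"
    using C K Lp_norm_nonneg[of p h] by simp
qed (use p in simp)

section \<open>Approximation of C^1 functions\<close>

lemma C1E:
  assumes "g \<in> C1"
  obtains g' G0 G1 where
    "\<And>x. x \<in> {0..1} \<Longrightarrow> (g has_real_derivative g' x) (at x within {0..1})"
    "\<And>x. x \<in> {0..1} \<Longrightarrow> \<bar>g x\<bar> \<le> G0" "\<And>x. x \<in> {0..1} \<Longrightarrow> \<bar>g' x\<bar> \<le> G1"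
    "C1_norm g = G0 + G1"
proof -
  from assms obtain g' where g': "continuous_on {0..1} g'"
    "\<And>x. x \<in> {0..1} \<Longrightarrow> (g has_real_derivative g' x) (at x within {0..1})"
    unfolding C1_def by blast
  have "continuous_on {0..1} g"
    using g'(2) by (rule DERIV_continuous_on)
  then have "compact ((\<lambda>x. \<bar>g x\<bar>) ` {0..1})" "compact ((\<lambda>x. \<bar>g' x\<bar>) ` {0..1})"
    using g'(1) by (auto intro!: compact_continuous_image continuous_on_rabs)
  then have "bdd_above ((\<lambda>x. \<bar>g x\<bar>) ` {0..1})" "bdd_above ((\<lambda>x. \<bar>g' x\<bar>) ` {0..1})"
    by (auto intro: bounded_imp_bdd_above compact_imp_bounded)
  moreover have "vector_derivative g (at x within {0..1}) = g' x" if "x \<in> {0..1}" for x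
    using g'(2)[OF that] that
    by (intro vector_derivative_within_closed_interval) (auto simp: has_real_derivative_iff_has_vector_derivative)
  ultimately show ?thesis
    by (intro that[OF g'(2), of "SUP x\<in>{0..1}. \<bar>g x\<bar>" "SUP x\<in>{0..1}. \<bar>g' x\<bar>"] cSUP_upper)
       (auto simp: C1_norm_def intro!: SUP_cong)
qed

lemma C1_continuous_on: "g \<in> C1 \<Longrightarrow> continuous_on {0..1} g"
  unfolding C1_def by (auto intro: DERIV_continuous_on)

lemma C1_norm_nonneg:
  assumes "g \<in> C1"
  shows "0 \<le> C1_norm g"
proof (rule C1E[OF assms])
  fix g' G0 G1
  assume "\<And>x. x \<in> {0..1} \<Longrightarrow> (g has_real_derivative g' x) (at x within {0..1})"
    and G0: "\<And>x. x \<in> {0..1} \<Longrightarrow> \<bar>g x\<bar> \<le> G0"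
    and G1: "\<And>x. x \<in> {0..1} \<Longrightarrow> \<bar>g' x\<bar> \<le> G1"
    and "C1_norm g = G0 + G1"
  moreover have "\<bar>g 0\<bar> \<le> G0" "\<bar>g' 0\<bar> \<le> G1"
    using G0 G1 by auto
  ultimately show ?thesis
    by linarith
qed

lemma zero_in_C1: "(\<lambda>_. 0) \<in> C1"
  unfolding C1_def by (auto intro!: exI[of _ "\<lambda>_. 0"])

lemma fmu_lipschitz:
  assumes \<mu>: "\<mu> > 0"
    and g': "\<And>y. y \<in> {0..1} \<Longrightarrow> (g has_real_derivative g' y) (at y within {0..1})"
    and G0: "\<And>y. y \<in> {0..1} \<Longrightarrow> \<bar>g y\<bar> \<le> G0"
    and G1: "\<And>y. y \<in> {0..1} \<Longrightarrow> \<bar>g' y\<bar> \<le> G1"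
    and t: "t \<in> {0..1}" and x: "x \<in> {0..1}"
  shows "\<bar>fmu \<mu> g t - fmu \<mu> g x\<bar> \<le> (1 + 1 / ((1 + \<mu>) * ln (1 + \<mu>))) * (G0 + G1) / ln (1 + \<mu>) * \<bar>t - x\<bar>"
proof -
  define L where "L = ln (1 + \<mu>)"
  define D where "D y = (g' y * lnmu \<mu> y - g y * (1 / (1 + \<mu> + y))) / (lnmu \<mu> y * lnmu \<mu> y)" for y
  have G: "0 \<le> G0" "0 \<le> G1"
    using G0[of 0] G1[of 0] by auto
  have deriv: "(fmu \<mu> g has_real_derivative D y) (at y within {0..1})" if y: "y \<in> {0..1}" for y
    unfolding fmu_def[abs_def] D_def using lnmu_bounds(4)[OF \<mu> y] y
    by (intro DERIV_divide g' has_field_derivative_at_within[OF has_real_derivative_lnmu[OF \<mu>]]) auto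
  have bound: "norm (D y) \<le> (1 + 1 / ((1 + \<mu>) * L)) * (G0 + G1) / L" if y: "y \<in> {0..1}" for y
  proof -
    note l = lnmu_bounds[OF \<mu> y, folded L_def]
    have q: "1 + \<mu> \<le> 1 + \<mu> + y" "0 < 1 + \<mu> + y"
      using y \<mu> by simp_all
    have "D y = g' y / lnmu \<mu> y - g y / ((1 + \<mu> + y) * (lnmu \<mu> y * lnmu \<mu> y))"
      using l(4) q(2) unfolding D_def by (simp add: diff_divide_distrib)
    then have "\<bar>D y\<bar> \<le> \<bar>g' y\<bar> / lnmu \<mu> y + \<bar>g y\<bar> / ((1 + \<mu> + y) * (lnmu \<mu> y * lnmu \<mu> y))"
      using l q \<mu> by (simp add: abs_mult order.trans[OF abs_triangle_ineq4])
    also have "\<dots> \<le> G1 / L + G0 / ((1 + \<mu>) * (L * L))"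
    proof (rule add_mono)
      show "\<bar>g' y\<bar> / lnmu \<mu> y \<le> G1 / L"
        using l G1[OF y] G by (intro frac_le) auto
      show "\<bar>g y\<bar> / ((1 + \<mu> + y) * (lnmu \<mu> y * lnmu \<mu> y)) \<le> G0 / ((1 + \<mu>) * (L * L))"
        using l q \<mu> G0[OF y] G by (intro frac_le mult_mono mult_pos_pos) auto
    qed
    also have "\<dots> \<le> (G0 + G1) / L + (G0 + G1) / ((1 + \<mu>) * (L * L))"
      using l G \<mu> by (intro add_mono divide_right_mono) auto
    also have "\<dots> = (1 + 1 / ((1 + \<mu>) * L)) * (G0 + G1) / L"
      by (simp add: distrib_right add_divide_distrib mult.assoc)
    finally show ?thesis
      by simp
  qed
  from field_differentiable_bound[OF convex_real_interval(5) deriv bound t x] show ?thesis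
    by (simp add: L_def)
qed

lemma abs_cell_mean_sub_le:
  fixes u :: "real \<Rightarrow> real"
  assumes u: "continuous_on {0..1} u" and M: "M \<ge> 0" and k: "k \<le> n"
    and lip: "\<And>t. t \<in> {0..1} \<Longrightarrow> \<bar>u t - u x\<bar> \<le> M * \<bar>t - x\<bar>"
  shows "\<bar>cell_mean n u k - u x\<bar> \<le> M * (\<bar>real k / real (n + 1) - x\<bar> + 1 / real (n + 1))"
proof -
  define m where "m = real (n + 1)"
  define r where "r = M * (\<bar>real k / m - x\<bar> + 1 / m)"
  have m: "m > 0"
    by (simp add: m_def)
  have int: "u integrable_on cell n k"
    using integrable_on_cell[OF integrable_continuous_interval[OF u] k] .
  have "integral (cell n k) (\<lambda>t. u t - u x) = integral (cell n k) u - u x / m"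
    using integral_diff[OF int, of "\<lambda>_. u x"] integral_cell_const[of n k "u x"]
    unfolding m_def cell_def by (simp only: integrable_const_ivl simp_thms)
  then have "cell_mean n u k - u x = m * integral (cell n k) (\<lambda>t. u t - u x)"
    using cell_mean_eq_integral[OF continuous_imp_integrable_real[OF u] k] m
    by (simp add: m_def right_diff_distrib)
  then have "\<bar>cell_mean n u k - u x\<bar> = m * \<bar>integral (cell n k) (\<lambda>t. u t - u x)\<bar>"
    using m by (simp add: abs_mult)
  moreover have "\<bar>integral (cell n k) (\<lambda>t. u t - u x)\<bar> \<le> integral (cell n k) (\<lambda>t. r)"
  proof (rule integral_norm_bound_integral[where f = "\<lambda>t. u t - u x", simplified])
    show "(\<lambda>t. u t - u x) integrable_on cell n k" "(\<lambda>t. r) integrable_on cell n k"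
      using int by (auto intro!: integrable_diff simp: cell_def)
    fix t
    assume t: "t \<in> cell n k"
    then have "\<bar>t - x\<bar> \<le> \<bar>real k / m - x\<bar> + 1 / m"
      using cell_length[of k n] by (auto simp: cell_def m_def)
    then have "M * \<bar>t - x\<bar> \<le> r"
      unfolding r_def using M by (rule mult_left_mono)
    with lip[of t] t cell_subset[OF k] show "\<bar>u t - u x\<bar> \<le> r"
      by auto
  qed
  ultimately show ?thesis
    using m integral_cell_const[of n k r] by (simp add: r_def m_def pos_le_divide_eq mult.commute)
qed

lemma abs_LK_sub_le_C1:
  assumes \<mu>: "\<mu> > 0" and g: "g \<in> C1" and n: "n \<ge> 1" and x: "x \<in> {0..1}"
  shows "\<bar>LK \<mu> n g x - g x\<bar>
    \<le> ln (2 + \<mu>) / ln (1 + \<mu>) * (1 + 1 / ((1 + \<mu>) * ln (1 + \<mu>))) * Tn \<mu> n * C1_norm g"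
proof -
  obtain g' G0 G1 where g': "\<And>x. x \<in> {0..1} \<Longrightarrow> (g has_real_derivative g' x) (at x within {0..1})"
    and G0: "\<And>x. x \<in> {0..1} \<Longrightarrow> \<bar>g x\<bar> \<le> G0"
    and G1: "\<And>x. x \<in> {0..1} \<Longrightarrow> \<bar>g' x\<bar> \<le> G1"
    and norm: "C1_norm g = G0 + G1"
    using C1E[OF g] by blast
  define M where "M = (1 + 1 / ((1 + \<mu>) * ln (1 + \<mu>))) * (G0 + G1) / ln (1 + \<mu>)"
  define m where "m = real (n + 1)"
  define B where "B k = Bernstein n k (aseq \<mu> (n + 1) x)" for k
  have M: "0 \<le> M"
    using \<mu> G0[of 0] G1[of 0] by (auto simp: M_def)
  have B: "0 \<le> B k" "(\<Sum>k\<le>n. B k) = 1" for k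
    using aseq_in_unit[OF \<mu> x] by (auto simp: B_def intro: Bernstein_nonneg)
  note L = lnmu_bounds[OF \<mu> x]
  have dev: "\<bar>cell_mean n (fmu \<mu> g) k - fmu \<mu> g x\<bar> \<le> M * (\<bar>real k / m - x\<bar> + 1 / m)" if "k \<le> n" for k
    unfolding m_def M_def using that M x fmu_lipschitz[OF \<mu> g' G0 G1 _ x]
    by (intro abs_cell_mean_sub_le continuous_on_fmu[OF \<mu> C1_continuous_on[OF g]]) (auto simp: M_def)
  have "(\<Sum>k\<le>n. B k * fmu \<mu> g x) = fmu \<mu> g x"
    using B(2) by (simp flip: sum_distrib_right)
  then have "g x = lnmu \<mu> x * (\<Sum>k\<le>n. B k * fmu \<mu> g x)"
    using L(4) by (simp add: fmu_def)
  then have "LK \<mu> n g x - g x = lnmu \<mu> x * (\<Sum>k\<le>n. B k * (cell_mean n (fmu \<mu> g) k - fmu \<mu> g x))"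
    by (simp add: LK_eq B_def right_diff_distrib sum_subtractf)
  then have "\<bar>LK \<mu> n g x - g x\<bar> = lnmu \<mu> x * \<bar>\<Sum>k\<le>n. B k * (cell_mean n (fmu \<mu> g) k - fmu \<mu> g x)\<bar>"
    using L(4) by (simp add: abs_mult)
  also have "\<dots> \<le> ln (2 + \<mu>) * (\<Sum>k\<le>n. B k * (M * (\<bar>real k / m - x\<bar> + 1 / m)))"
    using L B(1) dev M
    by (intro mult_mono order.trans[OF sum_abs] sum_mono) (auto simp: abs_mult intro!: mult_left_mono sum_nonneg)
  also have "\<dots> = ln (2 + \<mu>) * M * ((\<Sum>k\<le>n. B k * \<bar>real k / m - x\<bar>) + 1 / m)"
  proof -
    have "(\<Sum>k\<le>n. B k * (M * (\<bar>real k / m - x\<bar> + 1 / m)))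
        = M * (\<Sum>k\<le>n. B k * \<bar>real k / m - x\<bar>) + M / m * (\<Sum>k\<le>n. B k)"
      by (simp add: sum.distrib sum_distrib_left algebra_simps)
    then show ?thesis
      using B(2) by (simp add: algebra_simps)
  qed
  also have "\<dots> \<le> ln (2 + \<mu>) * M * Tn \<mu> n"
    using sum_Bernstein_aseq_abs_dev_le[OF \<mu> x, of n] Tn_ge[OF n, of \<mu>] M \<mu>
    by (intro mult_left_mono) (auto simp: B_def m_def)
  finally show ?thesis
    by (simp add: M_def norm ac_simps)
qed

lemma Lp_norm_LK_sub_le_C1:
  assumes \<mu>: "\<mu> > 0" and p: "p \<ge> 1" and g: "g \<in> C1" and n: "n \<ge> 1"
  shows "Lp_norm p (\<lambda>x. LK \<mu> n g x - g x)
    \<le> ln (2 + \<mu>) / ln (1 + \<mu>) * (1 + 1 / ((1 + \<mu>) * ln (1 + \<mu>))) * Tn \<mu> n * C1_norm g"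
proof (rule Lp_norm_le_uniform_bound)
  show "in_Lp p (\<lambda>x. LK \<mu> n g x - g x)"
    using p by (intro in_Lp_continuous continuous_on_diff continuous_on_LK[OF \<mu>] C1_continuous_on[OF g]) auto
  show "0 \<le> ln (2 + \<mu>) / ln (1 + \<mu>) * (1 + 1 / ((1 + \<mu>) * ln (1 + \<mu>))) * Tn \<mu> n * C1_norm g"
    using \<mu> Tn_nonneg[OF \<mu>] C1_norm_nonneg[OF g] by simp
qed (use p abs_LK_sub_le_C1[OF \<mu> g n] in auto)

section \<open>The K-functional estimate\<close>

lemma Lp_norm_LK_sub_le:
  assumes \<mu>: "\<mu> > 0" and p: "1 \<le> p" and f: "in_Lp p f" and n: "n \<ge> 1" and g: "g \<in> C1"
  shows "Lp_norm p (\<lambda>x. LK \<mu> n f x - f x)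
    \<le> ln (2 + \<mu>) / ln (1 + \<mu>) * (Kmu \<mu> + 1) * (Lp_norm p (\<lambda>x. f x - g x) + Lambda \<mu> n * C1_norm g)"
proof -
  define C where "C = ln (2 + \<mu>) / ln (1 + \<mu>)"
  define D where "D = 1 + 1 / ((1 + \<mu>) * ln (1 + \<mu>))"
  define h where "h x = f x - g x" for x
  define e where "e x = LK \<mu> n g x - g x" for x
  have C: "C \<ge> 1" and D: "D \<ge> 0" and K: "Kmu \<mu> \<ge> 1" and T: "Tn \<mu> n \<ge> 0"
    using \<mu> Tn_nonneg[OF \<mu>] by (simp_all add: C_def D_def Kmu_def)
  have LKL: "in_Lp p (LK \<mu> n u)" for u
    using in_Lp_continuous[OF continuous_on_LK[OF \<mu>]] p by simp
  have gL: "in_Lp p g" and eL: "in_Lp p e"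
    using p by (auto intro!: in_Lp_continuous continuous_on_diff continuous_on_LK[OF \<mu>] C1_continuous_on[OF g]
      simp: e_def[abs_def])
  have hL: "in_Lp p h"
    using in_Lp_add[OF p f in_Lp_minus[OF gL]] by (simp add: h_def[abs_def])
  have "(\<lambda>x. LK \<mu> n f x - f x) = (\<lambda>x. (LK \<mu> n h x + e x) + - h x)"
    using LK_add[OF \<mu> p hL gL] by (simp add: fun_eq_iff h_def[abs_def] e_def)
  then have "Lp_norm p (\<lambda>x. LK \<mu> n f x - f x) \<le> Lp_norm p (\<lambda>x. LK \<mu> n h x + e x) + Lp_norm p h"
    using Lp_norm_add_le[OF p in_Lp_add[OF p LKL eL] in_Lp_minus[OF hL]] unfolding Lp_norm_minus by simp
  also have "\<dots> \<le> (Lp_norm p (LK \<mu> n h) + Lp_norm p e) + Lp_norm p h"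
    using Lp_norm_add_le[OF p LKL eL] by simp
  also have "\<dots> \<le> (C * Kmu \<mu> * Lp_norm p h + C * D * Tn \<mu> n * C1_norm g) + Lp_norm p h"
    using Lp_norm_LK_le[OF \<mu> p hL, of n] Lp_norm_LK_sub_le_C1[OF \<mu> p g n]
    unfolding C_def D_def e_def[abs_def] by linarith
  also have "\<dots> \<le> C * (Kmu \<mu> + 1) * (Lp_norm p h + Lambda \<mu> n * C1_norm g)"
  proof -
    \<comment> \<open>\<open>\<Lambda>\<^sub>n\<close> is calibrated so that \<open>C (K + 1) \<Lambda>\<^sub>n = C\<^sup>2 D T\<^sub>n\<close>, and \<open>C \<ge> 1\<close>\<close>
    have "C * (Kmu \<mu> + 1) * Lambda \<mu> n = C * (C * D * Tn \<mu> n)"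
      unfolding Lambda_def C_def[symmetric] D_def[symmetric] using K by (simp add: field_simps)
    moreover have "C * D * Tn \<mu> n * C1_norm g \<le> C * (C * D * Tn \<mu> n * C1_norm g)"
      and "Lp_norm p h \<le> C * Lp_norm p h"
      using mult_right_mono[OF C, of "C * D * Tn \<mu> n * C1_norm g"] mult_right_mono[OF C, of "Lp_norm p h"]
        C D T C1_norm_nonneg[OF g] Lp_norm_nonneg[of p h] by simp_all
    ultimately show ?thesis
      by (simp add: algebra_simps)
  qed
  finally show ?thesis
    by (simp add: C_def h_def[abs_def])
qed

theorem theorem6p2:
  fixes \<mu> p :: real and f :: "real \<Rightarrow> real"
  assumes "\<mu> > 0" and "1 \<le> p" and "in_Lp p f"
  shows "\<forall>\<^sub>F n in sequentially.
           Lp_norm p (\<lambda>x. LK \<mu> n f x - f x)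
             \<le> ln (2 + \<mu>) / ln (1 + \<mu>) * (Kmu \<mu> + 1) * Kfun p f (Lambda \<mu> n)"
proof (rule eventually_sequentiallyI[of 1])
  fix n :: nat
  assume n: "n \<ge> 1"
  define R where "R = ln (2 + \<mu>) / ln (1 + \<mu>) * (Kmu \<mu> + 1)"
  have R: "R > 0"
    using assms(1) by (simp add: R_def Kmu_def add_pos_pos)
  have "Lp_norm p (\<lambda>x. LK \<mu> n f x - f x) / R \<le> Lp_norm p (\<lambda>x. f x - g x) + Lambda \<mu> n * C1_norm g"
    if "g \<in> C1" for g
    using Lp_norm_LK_sub_le[OF assms n that] R by (simp only: R_def pos_divide_le_eq mult.commute)
  then have "Lp_norm p (\<lambda>x. LK \<mu> n f x - f x) / R \<le> Kfun p f (Lambda \<mu> n)"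
    unfolding Kfun_def using zero_in_C1 by (intro cINF_greatest) auto
  then show "Lp_norm p (\<lambda>x. LK \<mu> n f x - f x) \<le> R * Kfun p f (Lambda \<mu> n)"
    by (simp only: pos_divide_le_eq[OF R] mult.commute)
qed

end
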